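(* There exists no $\mathbb{N}$-rational sequence $x_1, x_2, \dots$ such that $x_{8n+1} > x_{9n+2}$ for all $n \geq 1$.
   Context: $\mathbb{N}=\{0,1,2,\dots\}$. A sequence $x_1, x_2, \dots \in \mathbb{N}$ is called $\mathbb{N}$-rational if there exist a dimension $d \geq 1$, a matrix $M \in \mathbb{N}^{d\times d}$ and vectors $v, w \in \mathbb{N}^d$ such that $x_n = v^{\top} M^n w$ for all $n \geq 1$. *)

theory Defs
  imports Main
begin

text \<open>Square matrices of dimension d over the naturals are represented as functions
  nat \<Rightarrow> nat \<Rightarrow> nat, only the entries with indices below d being relevant;
  vectors of dimension d as functions nat \<Rightarrow> nat, entries below d relevant.\<close>

definition mat_mult_nat :: "nat \<Rightarrow> (nat \<Rightarrow> nat \<Rightarrow> nat) \<Rightarrow> (nat \<Rightarrow> nat \<Rightarrow> nat) \<Rightarrow> (nat \<Rightarrow> nat \<Rightarrow> nat)" where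
  "mat_mult_nat d A B = (\<lambda>i j. \<Sum>k<d. A i k * B k j)"

definition mat_id_nat :: "nat \<Rightarrow> nat \<Rightarrow> nat" where
  "mat_id_nat = (\<lambda>i j. if i = j then 1 else 0)"

fun mat_pow_nat :: "nat \<Rightarrow> (nat \<Rightarrow> nat \<Rightarrow> nat) \<Rightarrow> nat \<Rightarrow> (nat \<Rightarrow> nat \<Rightarrow> nat)" where
  "mat_pow_nat d M 0 = mat_id_nat"
| "mat_pow_nat d M (Suc n) = mat_mult_nat d (mat_pow_nat d M n) M"

definition bilin_pow :: "nat \<Rightarrow> (nat \<Rightarrow> nat) \<Rightarrow> (nat \<Rightarrow> nat \<Rightarrow> nat) \<Rightarrow> (nat \<Rightarrow> nat) \<Rightarrow> nat \<Rightarrow> nat" where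
  "bilin_pow d v M w n = (\<Sum>i<d. \<Sum>j<d. v i * mat_pow_nat d M n i j * w j)"

text \<open>A sequence x (indexed from 1; the value x 0 is irrelevant) is N-rational.\<close>
definition N_rational :: "(nat \<Rightarrow> nat) \<Rightarrow> bool" where
  "N_rational x \<longleftrightarrow> (\<exists>d M v w. d \<ge> 1 \<and> (\<forall>n\<ge>1. x n = bilin_pow d v M w n))"

end

theory Submission
  imports Defs
begin

text \<open>Call a state a < d recurrent if (M^c)_aa > 0 for some 1 \<le> c \<le> d; then (M^m)_aa \<ge> 1
  whenever every c \<le> d divides m, so (M^L w)_a \<le> (M^(L+m) w)_a. By pigeonhole, every walk of
  length d along positive entries of M meets a recurrent state, and splitting M^L w along the
  first step of such walks propagates the inequality to all states once L \<ge> d. Hence an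
  \<nat>-rational sequence satisfies x_L \<le> x_(L+m) for L \<ge> d and lcm(1..d) dividing m, which
  contradicts x_(8n+1) > x_(9n+2) for n + 1 = (d+1)!.\<close>

lemma sum_mult_sum_swap:
  fixes a :: "'i \<Rightarrow> 'a::comm_semiring_0"
  shows "(\<Sum>k\<in>K. (\<Sum>l\<in>I. a l * b l k) * c k) = (\<Sum>l\<in>I. a l * (\<Sum>k\<in>K. b l k * c k))"
proof -
  have "(\<Sum>k\<in>K. (\<Sum>l\<in>I. a l * b l k) * c k) = (\<Sum>k\<in>K. \<Sum>l\<in>I. a l * (b l k * c k))"
    by (simp add: sum_distrib_right mult.assoc)
  also have "\<dots> = (\<Sum>l\<in>I. \<Sum>k\<in>K. a l * (b l k * c k))"
    by (rule sum.swap)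
  also have "\<dots> = (\<Sum>l\<in>I. a l * (\<Sum>k\<in>K. b l k * c k))"
    by (simp add: sum_distrib_left)
  finally show ?thesis .
qed


lemma mat_pow_nat_add:
  assumes "j < d"
  shows "mat_pow_nat d M (x + y) i j = (\<Sum>k<d. mat_pow_nat d M x i k * mat_pow_nat d M y k j)"
  using assms
proof (induction y arbitrary: j)
  case 0
  have "(\<Sum>k<d. mat_pow_nat d M x i k * mat_id_nat k j) = (\<Sum>k<d. if k = j then mat_pow_nat d M x i k else 0)"
    by (rule sum.cong) (auto simp: mat_id_nat_def)
  also have "\<dots> = mat_pow_nat d M x i j"
    using 0 by (simp add: sum.delta')
  finally show ?case by simp
next
  case (Suc y)
  have "mat_pow_nat d M (x + Suc y) i j = (\<Sum>k<d. mat_pow_nat d M (x + y) i k * M k j)"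
    by (simp add: mat_mult_nat_def)
  also have "\<dots> = (\<Sum>k<d. (\<Sum>l<d. mat_pow_nat d M x i l * mat_pow_nat d M y l k) * M k j)"
    using Suc.IH by (intro sum.cong) auto
  also have "\<dots> = (\<Sum>l<d. mat_pow_nat d M x i l * (\<Sum>k<d. mat_pow_nat d M y l k * M k j))"
    by (rule sum_mult_sum_swap)
  also have "\<dots> = (\<Sum>l<d. mat_pow_nat d M x i l * mat_pow_nat d M (Suc y) l j)"
    by (simp add: mat_mult_nat_def)
  finally show ?case .
qed

lemma mat_pow_nat_one:
  assumes "i < d"
  shows "mat_pow_nat d M 1 i j = M i j"
proof -
  have "mat_pow_nat d M 1 i j = (\<Sum>k<d. mat_id_nat i k * M k j)"
    by (simp add: mat_mult_nat_def)
  also have "\<dots> = (\<Sum>k<d. if k = i then M k j else 0)"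
    by (rule sum.cong) (auto simp: mat_id_nat_def)
  also have "\<dots> = M i j"
    using assms by (simp add: sum.delta')
  finally show ?thesis .
qed

lemma mat_pow_nat_diag_mult_le:
  assumes "a < d"
  shows "mat_pow_nat d M x a a * mat_pow_nat d M y a a \<le> mat_pow_nat d M (x + y) a a"
  unfolding mat_pow_nat_add[OF assms] using assms by (intro member_le_sum) auto

lemma mat_pow_nat_diag_pos_mult:
  assumes "a < d" "mat_pow_nat d M c a a > 0"
  shows "mat_pow_nat d M (c * r) a a > 0"
proof (induction r)
  case 0
  then show ?case by (simp add: mat_id_nat_def)
next
  case (Suc r)
  have "0 < mat_pow_nat d M c a a * mat_pow_nat d M (c * r) a a"
    using Suc assms(2) by simp
  also have "\<dots> \<le> mat_pow_nat d M (c + c * r) a a"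
    by (rule mat_pow_nat_diag_mult_le[OF assms(1)])
  finally show ?case by simp
qed

lemma mat_pow_nat_walk_pos:
  assumes "\<forall>i<c. M (f i) (f (Suc i)) > 0" "\<forall>i\<le>c. f i < d"
  shows "mat_pow_nat d M c (f 0) (f c) > 0"
  using assms
proof (induction c)
  case 0
  then show ?case by (simp add: mat_id_nat_def)
next
  case (Suc c)
  have "0 < mat_pow_nat d M c (f 0) (f c) * M (f c) (f (Suc c))"
    using Suc by simp
  also have "\<dots> \<le> (\<Sum>k<d. mat_pow_nat d M c (f 0) k * M k (f (Suc c)))"
    using Suc.prems(2) by (intro member_le_sum) auto
  finally show ?case by (simp add: mat_mult_nat_def)
qed


definition mat_pow_vec :: "nat \<Rightarrow> (nat \<Rightarrow> nat \<Rightarrow> nat) \<Rightarrow> (nat \<Rightarrow> nat) \<Rightarrow> nat \<Rightarrow> nat \<Rightarrow> nat" where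
  "mat_pow_vec d M w L a = (\<Sum>j<d. mat_pow_nat d M L a j * w j)"

lemma bilin_pow_eq_mat_pow_vec: "bilin_pow d v M w L = (\<Sum>i<d. v i * mat_pow_vec d M w L i)"
  unfolding bilin_pow_def mat_pow_vec_def by (simp add: sum_distrib_left mult.assoc)

lemma mat_pow_vec_add:
  "mat_pow_vec d M w (x + L) a = (\<Sum>b<d. mat_pow_nat d M x a b * mat_pow_vec d M w L b)"
proof -
  have "mat_pow_vec d M w (x + L) a
      = (\<Sum>j<d. (\<Sum>b<d. mat_pow_nat d M x a b * mat_pow_nat d M L b j) * w j)"
    unfolding mat_pow_vec_def by (intro sum.cong) (auto simp: mat_pow_nat_add)
  also have "\<dots> = (\<Sum>b<d. mat_pow_nat d M x a b * mat_pow_vec d M w L b)"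
    unfolding mat_pow_vec_def by (rule sum_mult_sum_swap)
  finally show ?thesis .
qed

lemma mat_pow_vec_Suc:
  assumes "a < d"
  shows "mat_pow_vec d M w (Suc L) a = (\<Sum>b<d. M a b * mat_pow_vec d M w L b)"
  using mat_pow_vec_add[of d M w 1 L a] mat_pow_nat_one[OF assms, of M] by simp


definition recurrent :: "nat \<Rightarrow> (nat \<Rightarrow> nat \<Rightarrow> nat) \<Rightarrow> nat \<Rightarrow> bool" where
  "recurrent d M a \<longleftrightarrow> (\<exists>c. 1 \<le> c \<and> c \<le> d \<and> mat_pow_nat d M c a a > 0)"

fun walks_meet_recurrent :: "nat \<Rightarrow> (nat \<Rightarrow> nat \<Rightarrow> nat) \<Rightarrow> nat \<Rightarrow> nat \<Rightarrow> bool" where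
  "walks_meet_recurrent d M 0 a = recurrent d M a"
| "walks_meet_recurrent d M (Suc k) a =
     (recurrent d M a \<or> (\<forall>b<d. M a b > 0 \<longrightarrow> walks_meet_recurrent d M k b))"

lemma recurrent_mat_pow_nat_pos:
  assumes "recurrent d M a" "a < d" "\<And>c. 1 \<le> c \<Longrightarrow> c \<le> d \<Longrightarrow> c dvd m"
  shows "mat_pow_nat d M m a a > 0"
proof -
  obtain c where c: "1 \<le> c" "c \<le> d" "mat_pow_nat d M c a a > 0"
    using assms(1) unfolding recurrent_def by auto
  obtain r where "m = c * r"
    using assms(3)[OF c(1,2)] by (auto elim: dvdE)
  then show ?thesis
    using mat_pow_nat_diag_pos_mult[OF assms(2) c(3)] by simp
qed

lemma recurrent_mat_pow_vec_le:
  assumes "recurrent d M a" "a < d" "\<And>c. 1 \<le> c \<Longrightarrow> c \<le> d \<Longrightarrow> c dvd m"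
  shows "mat_pow_vec d M w L a \<le> mat_pow_vec d M w (L + m) a"
proof -
  have "mat_pow_vec d M w L a \<le> mat_pow_nat d M m a a * mat_pow_vec d M w L a"
    using recurrent_mat_pow_nat_pos[OF assms] by simp
  also have "\<dots> \<le> (\<Sum>b<d. mat_pow_nat d M m a b * mat_pow_vec d M w L b)"
    using assms(2) by (intro member_le_sum) auto
  also have "\<dots> = mat_pow_vec d M w (m + L) a"
    by (rule mat_pow_vec_add[symmetric])
  finally show ?thesis by (simp add: add.commute)
qed

lemma walks_meet_recurrent_mat_pow_vec_le:
  assumes "walks_meet_recurrent d M k a" "a < d" "k \<le> L"
    and dvd: "\<And>c. 1 \<le> c \<Longrightarrow> c \<le> d \<Longrightarrow> c dvd m"
  shows "mat_pow_vec d M w L a \<le> mat_pow_vec d M w (L + m) a"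
  using assms(1-3)
proof (induction k arbitrary: a L)
  case 0
  then show ?case using recurrent_mat_pow_vec_le dvd by simp
next
  case (Suc k)
  show ?case
  proof (cases "recurrent d M a")
    case True
    then show ?thesis using recurrent_mat_pow_vec_le Suc.prems(2) dvd by blast
  next
    case False
    then have succ: "\<forall>b<d. M a b > 0 \<longrightarrow> walks_meet_recurrent d M k b"
      using Suc.prems(1) by simp
    obtain L' where L: "L = Suc L'" "k \<le> L'"
      using Suc.prems(3) by (cases L) auto
    have "mat_pow_vec d M w L a = (\<Sum>b<d. M a b * mat_pow_vec d M w L' b)"
      using L mat_pow_vec_Suc Suc.prems(2) by blast
    also have "\<dots> \<le> (\<Sum>b<d. M a b * mat_pow_vec d M w (L' + m) b)"
    proof (rule sum_mono)
      fix b assume "b \<in> {..<d}"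
      then show "M a b * mat_pow_vec d M w L' b \<le> M a b * mat_pow_vec d M w (L' + m) b"
        using succ Suc.IH[of b L'] L by (cases "M a b = 0") auto
    qed
    also have "\<dots> = mat_pow_vec d M w (L + m) a"
      using L mat_pow_vec_Suc Suc.prems(2) by simp
    finally show ?thesis .
  qed
qed

lemma not_walks_meet_recurrent_walk:
  assumes "a < d" "\<not> walks_meet_recurrent d M k a"
  obtains f where "f 0 = a" "\<forall>i\<le>k. \<not> recurrent d M (f i) \<and> f i < d"
    "\<forall>i<k. M (f i) (f (Suc i)) > 0"
  using assms
proof (induction k arbitrary: a thesis)
  case 0
  then show ?case by (auto intro: "0.prems"(1)[of "\<lambda>_. a"])
next
  case (Suc k)
  then obtain b where b: "b < d" "M a b > 0" "\<not> walks_meet_recurrent d M k b"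
    and a: "\<not> recurrent d M a" by auto
  obtain g where g: "g 0 = b" "\<forall>i\<le>k. \<not> recurrent d M (g i) \<and> g i < d"
    "\<forall>i<k. M (g i) (g (Suc i)) > 0"
    using Suc.IH[OF _ b(1) b(3)] by blast
  let ?f = "\<lambda>i. case i of 0 \<Rightarrow> a | Suc j \<Rightarrow> g j"
  show ?case
  proof (rule Suc.prems(1)[of ?f])
    show "\<forall>i\<le>Suc k. \<not> recurrent d M (?f i) \<and> ?f i < d"
      using g a Suc.prems(2) by (auto split: nat.split)
    show "\<forall>i<Suc k. M (?f i) (?f (Suc i)) > 0"
      using g b by (auto split: nat.split)
  qed simp
qed

lemma walks_meet_recurrent_dim:
  assumes "a < d"
  shows "walks_meet_recurrent d M d a"
proof (rule ccontr)
  assume "\<not> walks_meet_recurrent d M d a"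
  then obtain f where f: "\<forall>i\<le>d. \<not> recurrent d M (f i) \<and> f i < d"
    "\<forall>i<d. M (f i) (f (Suc i)) > 0"
    using not_walks_meet_recurrent_walk[OF assms] by metis
  have "\<not> inj_on f {..d}"
  proof
    assume "inj_on f {..d}"
    then have "card (f ` {..d}) = Suc d" by (simp add: card_image)
    moreover have "f ` {..d} \<subseteq> {..<d}" using f(1) by auto
    then have "card (f ` {..d}) \<le> d" using card_mono[of "{..<d}"] by simp
    ultimately show False by simp
  qed
  then obtain i j where ij: "i < j" "j \<le> d" "f i = f j"
    unfolding inj_on_def by (metis atMost_iff linorder_neqE_nat)
  have "mat_pow_nat d M (j - i) (f (i + 0)) (f (i + (j - i))) > 0"
    using f ij by (intro mat_pow_nat_walk_pos[of "j - i" M "\<lambda>k. f (i + k)"]) auto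
  then have "recurrent d M (f i)"
    using ij unfolding recurrent_def by (intro exI[of _ "j - i"]) auto
  then show False using f(1) ij by auto
qed

lemma N_rational_le_shift:
  assumes "N_rational x"
  obtains d where "d \<ge> 1"
    "\<And>L m. d \<le> L \<Longrightarrow> (\<And>c. 1 \<le> c \<Longrightarrow> c \<le> d \<Longrightarrow> c dvd m) \<Longrightarrow> x L \<le> x (L + m)"
proof -
  obtain d M v w where d: "d \<ge> 1" and x: "\<forall>n\<ge>1. x n = bilin_pow d v M w n"
    using assms unfolding N_rational_def by blast
  have "x L \<le> x (L + m)"
    if L: "d \<le> L" and dvd: "\<And>c. 1 \<le> c \<Longrightarrow> c \<le> d \<Longrightarrow> c dvd m" for L m
  proof -
    have "x L = (\<Sum>i<d. v i * mat_pow_vec d M w L i)"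
      using x d L by (simp add: bilin_pow_eq_mat_pow_vec)
    also have "\<dots> \<le> (\<Sum>i<d. v i * mat_pow_vec d M w (L + m) i)"
      using walks_meet_recurrent_mat_pow_vec_le[OF walks_meet_recurrent_dim _ L dvd]
      by (intro sum_mono mult_left_mono) auto
    also have "\<dots> = x (L + m)"
      using x d L by (simp add: bilin_pow_eq_mat_pow_vec)
    finally show ?thesis .
  qed
  then show ?thesis using that d by blast
qed

theorem mainTheorem1:
  shows "\<not> (\<exists>x. N_rational x \<and> (\<forall>n\<ge>1. x (8*n+1) > x (9*n+2)))"
proof
  assume "\<exists>x. N_rational x \<and> (\<forall>n\<ge>1. x (8*n+1) > x (9*n+2))"
  then obtain x where x: "N_rational x" and gt: "\<forall>n\<ge>1. x (8*n+1) > x (9*n+2)"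
    by blast
  obtain d where d: "d \<ge> 1"
    and le: "\<And>L m. d \<le> L \<Longrightarrow> (\<And>c. 1 \<le> c \<Longrightarrow> c \<le> d \<Longrightarrow> c dvd m) \<Longrightarrow> x L \<le> x (L + m)"
    using N_rational_le_shift[OF x] by blast
  define n where "n = fact (d + 1) - (1::nat)"
  have "d + 1 \<le> fact (d + 1)"
    by (rule fact_ge_self)
  then have n: "n \<ge> 1" "d \<le> 8*n+1" "9*n+2 = (8*n+1) + fact (d + 1)"
    using d unfolding n_def by auto
  have "x (8*n+1) \<le> x (9*n+2)"
    unfolding n(3) using n(2) by (rule le) (simp add: dvd_fact)
  then show False using gt n(1) by (simp add: not_less[symmetric])
qed

end
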